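(* For every integer $n>1$, the Cuntz algebra $O_n$ is not symmetrically pseudo-amenable.
   Context: The Cuntz algebra $O_n$ ($n\ge2$) is the unital $C^*$-algebra generated by elements $T_1,\dots,T_n$ satisfying $T_i^*T_i=I$ for each $i$ and $\sum_{i=1}^n T_iT_i^*=I$. For a Banach algebra $\mathfrak{U}$, $\mathfrak{U}\widehat{\otimes}\mathfrak{U}$ is the projective tensor product, with $a(b\otimes c)=ab\otimes c$, $(b\otimes c)a=b\otimes ca$, and $\pi(b\otimes c)=bc$ (extended linearly and continuously). The flip is $(b\otimes c)^{\circ}=c\otimes b$; $\mathbf{t}$ is symmetric if $\mathbf{t}^\circ=\mathbf{t}$. An approximate diagonal is a net $\{\mathbf{t}_\lambda\}$ in $\mathfrak{U}\widehat{\otimes}\mathfrak{U}$ (not necessarily bounded) with $a\mathbf{t}_\lambda-\mathbf{t}_\lambda a\to0$ and $\pi(\mathbf{t}_\lambda)a\to a$ for all $a\in\mathfrak{U}$. $\mathfrak{U}$ is symmetrically pseudo-amenable if it has an approximate diagonal consisting of symmetric elements. *)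

theory Defs
  imports "HOL-Analysis.Analysis"
begin

text \<open>Complex unital C*-algebras are modelled on a type 'a of class
  real_normed_algebra_1 + banach (so the unit has norm 1 and 1 is not 0),
  together with an element iu playing the role of i*1 (this gives the complex
  scalar multiplication) and an involution st.\<close>

definition cscale :: "'a::real_normed_algebra_1 \<Rightarrow> complex \<Rightarrow> 'a \<Rightarrow> 'a" where
  "cscale iu c x = Re c *\<^sub>R x + Im c *\<^sub>R (iu * x)"

definition cstar_algebra :: "'a::{real_normed_algebra_1,banach} \<Rightarrow> ('a \<Rightarrow> 'a) \<Rightarrow> bool" where
  "cstar_algebra iu st \<longleftrightarrow>
     iu * iu = - 1 \<and> (\<forall>x. iu * x = x * iu) \<and>
     (\<forall>c x. norm (cscale iu c x) = cmod c * norm x) \<and>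
     (\<forall>x y. st (x + y) = st x + st y) \<and> (\<forall>r x. st (r *\<^sub>R x) = r *\<^sub>R st x) \<and>
     st iu = - iu \<and> (\<forall>x. st (st x) = x) \<and> (\<forall>x y. st (x * y) = st y * st x) \<and>
     (\<forall>x. norm (st x * x) = norm x ^ 2)"

inductive_set star_gen :: "'a::real_normed_algebra_1 \<Rightarrow> ('a \<Rightarrow> 'a) \<Rightarrow> nat \<Rightarrow> (nat \<Rightarrow> 'a) \<Rightarrow> 'a set"
  for iu st n T where
  one: "1 \<in> star_gen iu st n T"
| gen: "i < n \<Longrightarrow> T i \<in> star_gen iu st n T"
| add: "x \<in> star_gen iu st n T \<Longrightarrow> y \<in> star_gen iu st n T \<Longrightarrow> x + y \<in> star_gen iu st n T"
| mult: "x \<in> star_gen iu st n T \<Longrightarrow> y \<in> star_gen iu st n T \<Longrightarrow> x * y \<in> star_gen iu st n T"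
| scale: "x \<in> star_gen iu st n T \<Longrightarrow> cscale iu c x \<in> star_gen iu st n T"
| star: "x \<in> star_gen iu st n T \<Longrightarrow> st x \<in> star_gen iu st n T"

definition is_cuntz_algebra :: "nat \<Rightarrow> 'a::{real_normed_algebra_1,banach} \<Rightarrow> ('a \<Rightarrow> 'a) \<Rightarrow> (nat \<Rightarrow> 'a) \<Rightarrow> bool" where
  "is_cuntz_algebra n iu st T \<longleftrightarrow>
     cstar_algebra iu st \<and>
     (\<forall>i<n. st (T i) * T i = 1) \<and> (\<Sum>i<n. T i * st (T i)) = 1 \<and>
     closure (star_gen iu st n T) = UNIV"

text \<open>Projective tensor product: an element of A \<^emph>\<open>projective-tensor\<close> A is represented by a
  sequence f of pairs (a_k, b_k) with sum of norm a_k * norm b_k finite, standing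
  for the sum of a_k \<otimes> b_k. Its pairing with a bounded complex-bilinear
  form phi is the sum of phi a_k b_k; the dual of the projective tensor product is
  the space of bounded bilinear forms, so the norm of a difference of two
  elements is the supremum over forms of norm at most 1.\<close>

definition tensor_rep :: "(nat \<Rightarrow> 'a::real_normed_vector \<times> 'a) \<Rightarrow> bool" where
  "tensor_rep f \<longleftrightarrow> summable (\<lambda>k. norm (fst (f k)) * norm (snd (f k)))"

definition cbilinear_form :: "'a::real_normed_algebra_1 \<Rightarrow> ('a \<Rightarrow> 'a \<Rightarrow> complex) \<Rightarrow> bool" where
  "cbilinear_form iu \<phi> \<longleftrightarrow>
     (\<forall>x y z. \<phi> (x + y) z = \<phi> x z + \<phi> y z) \<and>
     (\<forall>x y z. \<phi> x (y + z) = \<phi> x y + \<phi> x z) \<and>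
     (\<forall>r x y. \<phi> (r *\<^sub>R x) y = of_real r * \<phi> x y) \<and>
     (\<forall>r x y. \<phi> x (r *\<^sub>R y) = of_real r * \<phi> x y) \<and>
     (\<forall>x y. \<phi> (iu * x) y = \<i> * \<phi> x y) \<and>
     (\<forall>x y. \<phi> x (iu * y) = \<i> * \<phi> x y) \<and>
     (\<forall>x y. cmod (\<phi> x y) \<le> norm x * norm y)"

definition tpair :: "('a \<Rightarrow> 'a \<Rightarrow> complex) \<Rightarrow> (nat \<Rightarrow> 'a \<times> 'a) \<Rightarrow> complex" where
  "tpair \<phi> f = (\<Sum>k. \<phi> (fst (f k)) (snd (f k)))"

definition tdist :: "'a::real_normed_algebra_1 \<Rightarrow> (nat \<Rightarrow> 'a \<times> 'a) \<Rightarrow> (nat \<Rightarrow> 'a \<times> 'a) \<Rightarrow> real" where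
  "tdist iu f g = Sup {cmod (tpair \<phi> f - tpair \<phi> g) | \<phi>. cbilinear_form iu \<phi>}"

definition tlmul :: "'a::times \<Rightarrow> (nat \<Rightarrow> 'a \<times> 'a) \<Rightarrow> (nat \<Rightarrow> 'a \<times> 'a)" where
  "tlmul a f = (\<lambda>k. (a * fst (f k), snd (f k)))"

definition trmul :: "(nat \<Rightarrow> 'a \<times> 'a) \<Rightarrow> 'a::times \<Rightarrow> (nat \<Rightarrow> 'a \<times> 'a)" where
  "trmul f a = (\<lambda>k. (fst (f k), snd (f k) * a))"

definition tflip :: "(nat \<Rightarrow> 'a \<times> 'a) \<Rightarrow> (nat \<Rightarrow> 'a \<times> 'a)" where
  "tflip f = (\<lambda>k. (snd (f k), fst (f k)))"

definition tpi :: "(nat \<Rightarrow> 'a::real_normed_algebra \<times> 'a) \<Rightarrow> 'a" where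
  "tpi f = (\<Sum>k. fst (f k) * snd (f k))"

text \<open>A net indexed via a (proper) filter F: a symmetric approximate diagonal.\<close>
definition symm_approx_diagonal ::
  "'a::{real_normed_algebra_1,banach} \<Rightarrow> 'i filter \<Rightarrow> ('i \<Rightarrow> nat \<Rightarrow> 'a \<times> 'a) \<Rightarrow> bool" where
  "symm_approx_diagonal iu F t \<longleftrightarrow>
     (\<forall>j. tensor_rep (t j)) \<and>
     (\<forall>j. tdist iu (t j) (tflip (t j)) = 0) \<and>
     (\<forall>a. ((\<lambda>j. tdist iu (tlmul a (t j)) (trmul (t j) a)) \<longlongrightarrow> 0) F) \<and>
     (\<forall>a. ((\<lambda>j. tpi (t j) * a) \<longlongrightarrow> a) F)"

definition symmetrically_pseudo_amenable :: "'i itself \<Rightarrow> 'a::{real_normed_algebra_1,banach} \<Rightarrow> bool" where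
  "symmetrically_pseudo_amenable _ iu \<longleftrightarrow>
     (\<exists>(F::'i filter) t. F \<noteq> bot \<and> symm_approx_diagonal iu F t)"

end

theory Submission
  imports Defs
begin

text \<open>A symmetric approximate diagonal t = (sum of a_k \<otimes> b_k) makes every state \<psi>
  approximately tracial. Put \<tau>(u) = sum of \<psi>(a_k u b_k). Pairing a t - t a with the bilinear
  form (x, y) \<mapsto> \<psi>(y c x) and using the symmetry of t shows \<tau>(c a) - \<tau>(a c) \<rightarrow> 0, while
  \<tau>(1) = \<psi>(\<pi> t) \<rightarrow> \<psi>(1) = 1. For the Cuntz isometries this gives
  n \<tau>(1) = \<Sum> \<tau>(T_i^* T_i) \<approx> \<Sum> \<tau>(T_i T_i^*) = \<tau>(1), impossible for n > 1.

  The state comes from a real functional f \<le> norm with f 1 = 1 (Hahn-Banach). We take f to be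
  a minimal sublinear functional below a shift of the norm (Zorn): shifting a sublinear q along y,
  inf over t \<ge> 0 of q(x + t y) - t q(y), gives a smaller sublinear functional that is odd on y,
  so minimal ones are linear.\<close>

definition sublinear :: "('a::real_vector \<Rightarrow> real) \<Rightarrow> bool" where
  "sublinear q \<longleftrightarrow>
     (\<forall>x y. q (x + y) \<le> q x + q y) \<and> (\<forall>r x. 0 \<le> r \<longrightarrow> q (r *\<^sub>R x) = r * q x)"

lemma sublinear_add: "sublinear q \<Longrightarrow> q (x + y) \<le> q x + q y"
  by (simp add: sublinear_def)

lemma sublinear_scaleR: "sublinear q \<Longrightarrow> 0 \<le> r \<Longrightarrow> q (r *\<^sub>R x) = r * q x"
  by (simp add: sublinear_def)

lemma sublinear_zero: "sublinear q \<Longrightarrow> q 0 = 0"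
  using sublinear_scaleR[of q 0 0] by simp

lemma sublinear_minus_le: "sublinear q \<Longrightarrow> - q (- x) \<le> q x"
  using sublinear_add[of q x "- x"] sublinear_zero[of q] by simp

lemma sublinearI:
  assumes add: "\<And>x y. q (x + y) \<le> q x + q y"
    and scale: "\<And>r x. 0 < r \<Longrightarrow> q (r *\<^sub>R x) \<le> r * q x"
    and zero: "q 0 \<le> 0"
  shows "sublinear q"
proof -
  have "q (r *\<^sub>R x) = r * q x" if "0 < r" for r x
  proof (rule antisym)
    have "inverse r *\<^sub>R r *\<^sub>R x = x"
      using that by simp
    then have "q x \<le> inverse r * q (r *\<^sub>R x)"
      using scale[of "inverse r" "r *\<^sub>R x"] that by simp
    then show "r * q x \<le> q (r *\<^sub>R x)"
      using that by (simp add: field_simps)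
  qed (use scale that in simp)
  moreover have "q 0 = 0"
    using add[of 0 0] zero by simp
  ultimately show ?thesis
    unfolding sublinear_def using add by (metis less_eq_real_def mult_zero_left scaleR_zero_left)
qed

lemma linear_if_sublinear_odd:
  assumes q: "sublinear q" and odd: "\<And>x. q (- x) = - q x"
  shows "linear q"
proof (rule linearI)
  show "q (x + y) = q x + q y" for x y
  proof (rule antisym)
    show "q (x + y) \<le> q x + q y"
      using q by (rule sublinear_add)
    have "q (- (x + y)) \<le> q (- x) + q (- y)"
      using sublinear_add[OF q, of "- x" "- y"] by (simp add: add.commute)
    then show "q x + q y \<le> q (x + y)"
      unfolding odd by linarith
  qed
  show "q (r *\<^sub>R x) = r *\<^sub>R q x" for r x
  proof (cases "0 \<le> r")
    case False
    then have "q (r *\<^sub>R x) = - q ((- r) *\<^sub>R x)"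
      by (simp add: odd flip: odd[of "(- r) *\<^sub>R x"])
    with False show ?thesis
      using sublinear_scaleR[OF q, of "- r" x] by simp
  qed (simp add: q sublinear_scaleR)
qed

definition sublinear_shift :: "('a::real_vector \<Rightarrow> real) \<Rightarrow> 'a \<Rightarrow> 'a \<Rightarrow> real" where
  "sublinear_shift q y x = (INF t\<in>{0..}. q (x + t *\<^sub>R y) - t * q y)"

lemma sublinear_shift_le:
  assumes q: "sublinear q" and t: "0 \<le> t"
  shows "sublinear_shift q y x \<le> q (x + t *\<^sub>R y) - t * q y"
  unfolding sublinear_shift_def
proof (rule cINF_lower)
  have "- q (- x) \<le> q (x + s *\<^sub>R y) - s * q y" if "0 \<le> s" for s
    using sublinear_add[OF q, of "x + s *\<^sub>R y" "- x"] sublinear_scaleR[OF q that] by simp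
  then show "bdd_below ((\<lambda>t. q (x + t *\<^sub>R y) - t * q y) ` {0..})"
    by (intro bdd_belowI2) auto
qed (use t in simp)

lemma sublinear_shift_greatest:
  "(\<And>t. 0 \<le> t \<Longrightarrow> z \<le> q (x + t *\<^sub>R y) - t * q y) \<Longrightarrow> z \<le> sublinear_shift q y x"
  unfolding sublinear_shift_def by (rule cINF_greatest) auto

lemma sublinear_shift_le_self: "sublinear q \<Longrightarrow> sublinear_shift q y x \<le> q x"
  using sublinear_shift_le[of q 0 y x] by simp

lemma sublinear_shift_minus: "sublinear q \<Longrightarrow> sublinear_shift q y (- y) \<le> - q y"
  using sublinear_shift_le[of q 1 y "- y"] sublinear_zero[of q] by simp

lemma sublinear_sublinear_shift:
  assumes q: "sublinear q"
  shows "sublinear (sublinear_shift q y)"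
proof (rule sublinearI)
  let ?s = "sublinear_shift q y"
  show "?s (a + b) \<le> ?s a + ?s b" for a b
  proof -
    have "?s (a + b) - (q (b + u *\<^sub>R y) - u * q y) \<le> ?s a" if u: "0 \<le> u" for u
    proof (rule sublinear_shift_greatest)
      fix t :: real
      assume t: "0 \<le> t"
      have "?s (a + b) \<le> q ((a + t *\<^sub>R y) + (b + u *\<^sub>R y)) - (t + u) * q y"
        using sublinear_shift_le[OF q, of "t + u" y "a + b"] t u by (simp add: algebra_simps)
      also have "\<dots> \<le> q (a + t *\<^sub>R y) + q (b + u *\<^sub>R y) - (t + u) * q y"
        using sublinear_add[OF q] by simp
      finally show "?s (a + b) - (q (b + u *\<^sub>R y) - u * q y) \<le> q (a + t *\<^sub>R y) - t * q y"
        by (simp add: algebra_simps)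
    qed
    then have "?s (a + b) - ?s a \<le> ?s b"
      by (intro sublinear_shift_greatest) (simp add: algebra_simps)
    then show ?thesis
      by simp
  qed
  show "?s (r *\<^sub>R a) \<le> r * ?s a" if r: "0 < r" for r a
  proof -
    have "?s (r *\<^sub>R a) / r \<le> ?s a"
    proof (rule sublinear_shift_greatest)
      fix t :: real
      assume "0 \<le> t"
      then have "?s (r *\<^sub>R a) \<le> q (r *\<^sub>R (a + t *\<^sub>R y)) - (r * t) * q y"
        using sublinear_shift_le[OF q, of "r * t" y "r *\<^sub>R a"] r by (simp add: algebra_simps)
      also have "\<dots> = r * (q (a + t *\<^sub>R y) - t * q y)"
        using sublinear_scaleR[OF q, of r "a + t *\<^sub>R y"] r by (simp add: algebra_simps)
      finally show "?s (r *\<^sub>R a) / r \<le> q (a + t *\<^sub>R y) - t * q y"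
        using r by (simp add: field_simps)
    qed
    then show ?thesis
      using r by (simp add: field_simps)
  qed
  show "?s 0 \<le> 0"
    using sublinear_shift_le_self[OF q] sublinear_zero[OF q] by metis
qed

lemma sublinear_INF_chain:
  assumes "C \<noteq> {}"
    and sub: "\<And>q. q \<in> C \<Longrightarrow> sublinear q"
    and le_p: "\<And>q. q \<in> C \<Longrightarrow> q \<le> p" and p: "sublinear p"
    and chain: "\<And>a b. a \<in> C \<Longrightarrow> b \<in> C \<Longrightarrow> a \<le> b \<or> b \<le> a"
  shows "sublinear (\<lambda>x. INF q\<in>C. q x)" and "\<And>q. q \<in> C \<Longrightarrow> (\<lambda>x. INF q\<in>C. q x) \<le> q"
proof -
  let ?g = "\<lambda>x. INF q\<in>C. q x"
  have bdd: "bdd_below ((\<lambda>q. q x) ` C)" for x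
  proof (rule bdd_belowI2)
    fix q
    assume q: "q \<in> C"
    then show "- p (- x) \<le> q x"
      using le_funD[OF le_p[OF q], of "- x"] sublinear_minus_le[OF sub[OF q], of x] by linarith
  qed
  have lower: "?g x \<le> q x" if "q \<in> C" for q x
    by (rule cINF_lower[OF bdd that])
  then show "\<And>q. q \<in> C \<Longrightarrow> ?g \<le> q"
    by (simp add: le_fun_def)
  have greatest: "z \<le> ?g x" if "\<And>q. q \<in> C \<Longrightarrow> z \<le> q x" for z x
    using \<open>C \<noteq> {}\<close> that by (rule cINF_greatest)
  show "sublinear ?g"
  proof (rule sublinearI)
    show "?g (a + b) \<le> ?g a + ?g b" for a b
    proof -
      have "?g (a + b) - q2 b \<le> q1 a" if q1: "q1 \<in> C" and q2: "q2 \<in> C" for q1 q2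
      proof -
        obtain m where "m \<in> C" "m \<le> q1" "m \<le> q2"
          using chain[OF q1 q2] q1 q2 by blast
        then have "?g (a + b) \<le> m a + m b"
          using lower sub sublinear_add order_trans by blast
        with le_funD[OF \<open>m \<le> q1\<close>, of a] le_funD[OF \<open>m \<le> q2\<close>, of b] show ?thesis
          by linarith
      qed
      then have "?g (a + b) - q2 b \<le> ?g a" if "q2 \<in> C" for q2
        using that by (intro greatest) auto
      then have "?g (a + b) - ?g a \<le> ?g b"
        by (intro greatest) (simp add: algebra_simps)
      then show ?thesis
        by simp
    qed
    show "?g (r *\<^sub>R a) \<le> r * ?g a" if r: "0 < r" for r a
    proof -
      have "?g (r *\<^sub>R a) / r \<le> ?g a"
      proof (rule greatest)
        fix q
        assume "q \<in> C"
        then have "?g (r *\<^sub>R a) \<le> r * q a"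
          using lower sub sublinear_scaleR r by (metis less_imp_le)
        then show "?g (r *\<^sub>R a) / r \<le> q a"
          using r by (simp add: field_simps)
      qed
      then show ?thesis
        using r by (simp add: field_simps)
    qed
    obtain q where "q \<in> C"
      using \<open>C \<noteq> {}\<close> by blast
    then show "?g 0 \<le> 0"
      using lower sub sublinear_zero by metis
  qed
qed

lemma exists_linear_le_sublinear:
  fixes p :: "'a::real_vector \<Rightarrow> real"
  assumes p: "sublinear p"
  shows "\<exists>f. linear f \<and> f \<le> p"
proof -
  define A where "A = {q. sublinear q \<and> q \<le> p}"
  have "\<exists>m \<in> A. \<forall>q \<in> A. m \<ge> q \<longrightarrow> q = m"
  proof (rule predicate_Zorn)
    show "partial_order_on A (relation_of (\<ge>) A)"
      by (rule partial_order_on_relation_ofI) auto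
    show "\<exists>u \<in> A. \<forall>q \<in> C. q \<ge> u" if C: "C \<in> Chains (relation_of (\<ge>) A)" for C
    proof (cases "C = {}")
      case True
      then show ?thesis
        using p by (auto simp: A_def)
    next
      case False
      have "C \<subseteq> A" and chain: "\<And>a b. a \<in> C \<Longrightarrow> b \<in> C \<Longrightarrow> a \<le> b \<or> b \<le> a"
        using C unfolding Chains_def relation_of_def by auto
      then have "\<And>q. q \<in> C \<Longrightarrow> sublinear q" and "\<And>q. q \<in> C \<Longrightarrow> q \<le> p"
        by (auto simp: A_def)
      note inf = sublinear_INF_chain[OF False this p chain]
      then have "(\<lambda>x. INF q\<in>C. q x) \<in> A"
        using \<open>\<And>q. q \<in> C \<Longrightarrow> q \<le> p\<close> False unfolding A_def by (blast intro: order_trans)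
      with inf(2) show ?thesis
        by blast
    qed
  qed
  then obtain m where "m \<in> A" and minimal: "\<And>q. q \<in> A \<Longrightarrow> q \<le> m \<Longrightarrow> q = m"
    by blast
  then have m: "sublinear m" and "m \<le> p"
    by (auto simp: A_def)
  have "m (- y) = - m y" for y
  proof -
    have "sublinear_shift m y \<le> m"
      using sublinear_shift_le_self[OF m] by (simp add: le_fun_def)
    with \<open>m \<le> p\<close> have "sublinear_shift m y = m"
      using minimal sublinear_sublinear_shift[OF m] unfolding A_def by (blast intro: order_trans)
    then have "m (- y) \<le> - m y"
      using sublinear_shift_minus[OF m, of y] by simp
    with sublinear_minus_le[OF m, of y] show ?thesis
      by simp
  qed
  with m have "linear m"
    by (rule linear_if_sublinear_odd)
  with \<open>m \<le> p\<close> show ?thesis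
    by blast
qed

lemma exists_norming_functional:
  fixes e :: "'a::real_normed_vector"
  shows "\<exists>f. linear f \<and> (\<forall>x. f x \<le> norm x) \<and> f e = norm e"
proof -
  have norm: "sublinear (norm :: 'a \<Rightarrow> real)"
    by (simp add: sublinear_def norm_triangle_ineq)
  obtain f where f: "linear f" and le: "f \<le> sublinear_shift norm e"
    using exists_linear_le_sublinear[OF sublinear_sublinear_shift[OF norm]] by blast
  have le_norm: "f x \<le> norm x" for x
    using le sublinear_shift_le_self[OF norm] by (metis le_fun_def order_trans)
  have "- f e = f (- e)"
    using f by (simp add: linear_neg)
  also have "\<dots> \<le> - norm e"
    using le sublinear_shift_minus[OF norm, of e] by (metis le_fun_def order_trans)
  finally have "f e = norm e"
    using le_norm[of e] by simp
  with f le_norm show ?thesis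
    by blast
qed

lemma cstar_norm_le_norm_star:
  assumes "cstar_algebra iu st"
  shows "norm x \<le> norm (st x)"
proof -
  have "norm x * norm x = norm (st x * x)"
    using assms by (simp add: cstar_algebra_def power2_eq_square)
  also have "\<dots> \<le> norm (st x) * norm x"
    by (rule norm_mult_ineq)
  finally show ?thesis
    by (cases "x = 0") auto
qed

lemma cstar_norm_star:
  assumes "cstar_algebra iu st"
  shows "norm (st x) = norm x"
  using cstar_norm_le_norm_star[OF assms, of x] cstar_norm_le_norm_star[OF assms, of "st x"] assms
  by (simp add: cstar_algebra_def)

lemma cstar_norm_isometry:
  assumes "cstar_algebra iu st" and "st v * v = 1"
  shows "norm v = 1"
proof -
  have "norm v ^ 2 = norm (st v * v)"
    using assms(1) by (simp add: cstar_algebra_def)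
  then have "norm v ^ 2 = 1"
    using assms(2) by simp
  then show ?thesis
    using norm_ge_zero[of v] by (auto simp: power2_eq_1_iff)
qed

locale complex_state =
  fixes iu :: "'a::{real_normed_algebra_1,banach}" and \<psi> :: "'a \<Rightarrow> complex"
  assumes iu_central: "\<And>x. iu * x = x * iu"
    and linear: "linear \<psi>"
    and mult_iu: "\<And>x. \<psi> (iu * x) = \<i> * \<psi> x"
    and norm_le: "\<And>x. cmod (\<psi> x) \<le> norm x"
    and one: "\<psi> 1 = 1"

lemma complex_state_exists:
  fixes iu :: "'a::{real_normed_algebra_1,banach}"
  assumes iu_square: "iu * iu = - 1" and iu_central: "\<And>x. iu * x = x * iu"
    and norm_cscale: "\<And>c x. norm (cscale iu c x) = cmod c * norm x"
  shows "\<exists>\<psi>. complex_state iu \<psi>"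
proof -
  obtain f :: "'a \<Rightarrow> real" where f: "linear f" and f_le: "\<And>x. f x \<le> norm x" and "f 1 = 1"
    using exists_norming_functional[of "1 :: 'a"] by auto
  define \<psi> where "\<psi> x = Complex (f x) (- f (iu * x))" for x
  have linear: "linear \<psi>"
  proof (rule linearI)
    show "\<psi> (a + b) = \<psi> a + \<psi> b" for a b
      by (simp add: \<psi>_def distrib_left linear_add[OF f] complex_eq_iff)
    show "\<psi> (r *\<^sub>R a) = r *\<^sub>R \<psi> a" for r a
      by (simp add: \<psi>_def linear_scale[OF f] complex_eq_iff)
  qed
  have mult_iu: "\<psi> (iu * x) = \<i> * \<psi> x" for x
  proof -
    have "iu * (iu * x) = - x"
      by (simp add: iu_square flip: mult.assoc)
    then show ?thesis
      using f by (simp add: \<psi>_def complex_eq_iff linear_neg)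
  qed
  have cscale: "\<psi> (cscale iu c x) = c * \<psi> x" for c x
    using linear by (simp add: cscale_def linear_add linear_scale mult_iu complex_eq_iff)
  have norm_le: "cmod (\<psi> x) \<le> norm x" for x
  proof -
    define c where "c = cis (- Arg (\<psi> x))"
    have "c * \<psi> x = c * (of_real (cmod (\<psi> x)) * cis (Arg (\<psi> x)))"
      by (simp add: rcis_cmod_Arg flip: rcis_def)
    also have "\<dots> = of_real (cmod (\<psi> x))"
      by (simp add: c_def cis_mult mult.left_commute)
    finally have "cmod (\<psi> x) = Re (c * \<psi> x)"
      by simp
    also have "\<dots> = f (cscale iu c x)"
      unfolding cscale[symmetric] by (simp add: \<psi>_def)
    also have "\<dots> \<le> norm x"
      using f_le[of "cscale iu c x"] by (simp add: norm_cscale c_def)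
    finally show ?thesis .
  qed
  have "\<psi> 1 = 1"
  proof -
    have "Re (\<psi> 1) = 1" and "cmod (\<psi> 1) ^ 2 \<le> 1"
      using \<open>f 1 = 1\<close> norm_le[of 1] by (simp_all add: \<psi>_def power_le_one)
    then show ?thesis
      by (simp add: cmod_power2 complex_eq_iff)
  qed
  with iu_central linear mult_iu norm_le show ?thesis
    by (blast intro: complex_state.intro)
qed

lemma cbilinear_form_swap:
  assumes "cbilinear_form iu \<phi>"
  shows "cbilinear_form iu (\<lambda>x y. \<phi> y x)"
proof -
  have "cmod (\<phi> y x) \<le> norm x * norm y" for x y
    using assms by (simp add: cbilinear_form_def mult.commute[of "norm x"])
  with assms show ?thesis
    by (simp add: cbilinear_form_def)
qed

lemma tensor_rep_dominated:
  assumes "tensor_rep f"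
    and "\<And>k. norm (fst (g k)) * norm (snd (g k)) \<le> C * (norm (fst (f k)) * norm (snd (f k)))"
  shows "tensor_rep g"
  unfolding tensor_rep_def
proof (rule summable_comparison_test)
  show "summable (\<lambda>k. C * (norm (fst (f k)) * norm (snd (f k))))"
    using assms(1) by (simp add: tensor_rep_def summable_mult)
qed (use assms(2) in simp)

lemma tensor_rep_tlmul: "tensor_rep f \<Longrightarrow> tensor_rep (tlmul (a::'a::real_normed_algebra) f)"
  by (erule tensor_rep_dominated[where C = "norm a"])
    (simp add: tlmul_def mult.assoc mult_right_mono norm_mult_ineq flip: mult.assoc)

lemma tensor_rep_trmul:
  fixes a :: "'a::real_normed_algebra"
  assumes "tensor_rep f"
  shows "tensor_rep (trmul f a)"
proof -
  have bound: "norm x * norm (y * a) \<le> norm a * (norm x * norm y)" for x y :: 'a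
  proof -
    have "norm x * norm (y * a) \<le> norm x * (norm y * norm a)"
      by (simp add: mult_left_mono norm_mult_ineq)
    then show ?thesis
      by (simp add: mult_ac)
  qed
  show ?thesis
    using assms by (rule tensor_rep_dominated[where C = "norm a"]) (simp add: trmul_def bound)
qed

lemma tensor_rep_tflip: "tensor_rep f \<Longrightarrow> tensor_rep (tflip f)"
  by (simp add: tensor_rep_def tflip_def mult.commute)

lemma summable_norm_tpair:
  assumes "tensor_rep f" and "cbilinear_form iu \<phi>"
  shows "summable (\<lambda>k. norm (\<phi> (fst (f k)) (snd (f k))))"
proof (rule summable_comparison_test)
  show "summable (\<lambda>k. norm (fst (f k)) * norm (snd (f k)))"
    using assms(1) by (simp add: tensor_rep_def)
qed (use assms(2) in \<open>simp add: cbilinear_form_def\<close>)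

lemma norm_tpair_le:
  assumes "tensor_rep f" and "cbilinear_form iu \<phi>"
  shows "cmod (tpair \<phi> f) \<le> (\<Sum>k. norm (fst (f k)) * norm (snd (f k)))"
proof -
  have "cmod (tpair \<phi> f) \<le> (\<Sum>k. norm (\<phi> (fst (f k)) (snd (f k))))"
    unfolding tpair_def by (rule summable_norm[OF summable_norm_tpair[OF assms]])
  also have "\<dots> \<le> (\<Sum>k. norm (fst (f k)) * norm (snd (f k)))"
    using assms summable_norm_tpair[OF assms]
    by (intro suminf_le) (auto simp: cbilinear_form_def tensor_rep_def)
  finally show ?thesis .
qed

lemma norm_tpair_diff_le_tdist:
  assumes f: "tensor_rep f" and g: "tensor_rep g" and \<phi>: "cbilinear_form iu \<phi>"
  shows "cmod (tpair \<phi> f - tpair \<phi> g) \<le> tdist iu f g"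
  unfolding tdist_def
proof (rule cSup_upper)
  let ?M = "(\<Sum>k. norm (fst (f k)) * norm (snd (f k))) + (\<Sum>k. norm (fst (g k)) * norm (snd (g k)))"
  have "cmod (tpair \<phi>' f - tpair \<phi>' g) \<le> ?M" if "cbilinear_form iu \<phi>'" for \<phi>'
    using norm_triangle_ineq4[of "tpair \<phi>' f" "tpair \<phi>' g"]
      norm_tpair_le[OF f that] norm_tpair_le[OF g that] by linarith
  then show "bdd_above {cmod (tpair \<phi> f - tpair \<phi> g) |\<phi>. cbilinear_form iu \<phi>}"
    by (intro bdd_aboveI[where M = ?M]) blast
qed (use \<phi> in blast)

lemma tpair_tflip: "tpair \<phi> (tflip f) = tpair (\<lambda>x y. \<phi> y x) f"
  by (simp add: tpair_def tflip_def)

lemma tpair_swap_eq_if_tdist_tflip_0: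
  assumes f: "tensor_rep f" and sym: "tdist iu f (tflip f) = 0" and \<phi>: "cbilinear_form iu \<phi>"
  shows "tpair (\<lambda>x y. \<phi> y x) f = tpair \<phi> f"
  using norm_tpair_diff_le_tdist[OF f tensor_rep_tflip[OF f] \<phi>] sym by (simp add: tpair_tflip)

lemma tendsto_tpair_diff:
  assumes "\<And>j. tensor_rep (f j)" and "\<And>j. tensor_rep (g j)"
    and "((\<lambda>j. tdist iu (f j) (g j)) \<longlongrightarrow> 0) F" and "cbilinear_form iu \<phi>"
  shows "((\<lambda>j. tpair \<phi> (f j) - tpair \<phi> (g j)) \<longlongrightarrow> 0) F"
  using assms(3) by (rule Lim_null_comparison[rotated]) (simp add: norm_tpair_diff_le_tdist assms)

definition tsandwich :: "('a::times \<Rightarrow> complex) \<Rightarrow> (nat \<Rightarrow> 'a \<times> 'a) \<Rightarrow> 'a \<Rightarrow> complex" where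
  "tsandwich \<psi> f u = tpair (\<lambda>x y. \<psi> (x * u * y)) f"

context complex_state
begin

lemma bounded_linear: "bounded_linear \<psi>"
  using linear norm_le
  by (intro bounded_linear_intro[where K = 1]) (simp_all add: linear_add linear_scale)

lemma norm_sandwich_le: "cmod (\<psi> (x * u * y)) \<le> norm u * (norm x * norm y)"
proof -
  have "norm (x * u * y) \<le> norm x * norm u * norm y"
    by (metis mult_right_mono norm_ge_zero norm_mult_ineq order_trans)
  then show ?thesis
    using norm_le[of "x * u * y"] by (simp add: mult_ac)
qed

lemma cbilinear_form_sandwich:
  assumes "norm u \<le> 1"
  shows "cbilinear_form iu (\<lambda>x y. \<psi> (x * u * y))"
proof -
  have "cmod (\<psi> (x * u * y)) \<le> norm x * norm y" for x y
    using norm_sandwich_le[of x u y] assms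
    by (metis mult_left_le_one_le mult_nonneg_nonneg norm_ge_zero order_trans)
  moreover have "x * u * (iu * y) = iu * (x * u * y)" and "iu * x * u * y = iu * (x * u * y)" for x y
    by (simp_all add: iu_central mult.assoc)
  moreover have "\<psi> (r *\<^sub>R z) = of_real r * \<psi> z" for r z
    using linear_scale[OF linear, of r z] by (simp only: scaleR_conv_of_real[of r "\<psi> z"])
  ultimately show ?thesis
    using linear by (simp add: cbilinear_form_def distrib_left distrib_right linear_add mult_iu)
qed

lemma summable_sandwich:
  assumes "tensor_rep f"
  shows "summable (\<lambda>k. \<psi> (fst (f k) * u * snd (f k)))"
proof (rule summable_norm_cancel, rule summable_comparison_test)
  show "summable (\<lambda>k. norm u * (norm (fst (f k)) * norm (snd (f k))))"
    using assms by (simp add: tensor_rep_def summable_mult)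
qed (simp add: norm_sandwich_le)

lemma tsandwich_sum:
  assumes "tensor_rep f"
  shows "tsandwich \<psi> f (\<Sum>i\<in>I. u i) = (\<Sum>i\<in>I. tsandwich \<psi> f (u i))"
proof -
  have "tsandwich \<psi> f (\<Sum>i\<in>I. u i) = (\<Sum>k. \<Sum>i\<in>I. \<psi> (fst (f k) * u i * snd (f k)))"
    using linear by (simp add: tsandwich_def tpair_def sum_distrib_left sum_distrib_right linear_sum)
  also have "\<dots> = (\<Sum>i\<in>I. tsandwich \<psi> f (u i))"
    using summable_sandwich[OF assms] by (simp add: suminf_sum tsandwich_def tpair_def)
  finally show ?thesis .
qed

lemma tsandwich_one:
  assumes "tensor_rep f"
  shows "tsandwich \<psi> f 1 = \<psi> (tpi f)"
proof -
  have "summable (\<lambda>k. fst (f k) * snd (f k))"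
  proof (rule summable_norm_cancel, rule summable_comparison_test)
    show "summable (\<lambda>k. norm (fst (f k)) * norm (snd (f k)))"
      using assms by (simp add: tensor_rep_def)
  qed (simp add: norm_mult_ineq)
  then show ?thesis
    by (simp add: tsandwich_def tpair_def tpi_def bounded_linear.suminf[OF bounded_linear])
qed

lemma tsandwich_swap:
  assumes "tensor_rep f" and "tdist iu f (tflip f) = 0" and "norm u \<le> 1"
  shows "tpair (\<lambda>x y. \<psi> (y * u * x)) f = tsandwich \<psi> f u"
  unfolding tsandwich_def
  using tpair_swap_eq_if_tdist_tflip_0[OF assms(1,2) cbilinear_form_sandwich[OF assms(3)]] .

lemma tendsto_tsandwich_commutator:
  assumes t: "symm_approx_diagonal iu F t" and a: "norm a \<le> 1" and c: "norm c \<le> 1"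
  shows "((\<lambda>j. tsandwich \<psi> (t j) (c * a) - tsandwich \<psi> (t j) (a * c)) \<longlongrightarrow> 0) F"
proof -
  have rep: "\<And>j. tensor_rep (t j)" and sym: "\<And>j. tdist iu (t j) (tflip (t j)) = 0"
    and comm: "((\<lambda>j. tdist iu (tlmul a (t j)) (trmul (t j) a)) \<longlongrightarrow> 0) F"
    using t by (simp_all add: symm_approx_diagonal_def)
  have "norm (c * a) \<le> 1" and "norm (a * c) \<le> 1"
    using norm_mult_ineq[of c a] norm_mult_ineq[of a c] mult_le_one[OF c norm_ge_zero a]
      mult_le_one[OF a norm_ge_zero c] by simp_all
  note sandwich_swap = tsandwich_swap[OF rep sym this(1)] tsandwich_swap[OF rep sym this(2)]
  \<comment> \<open>Pairing with \<phi> reads a t and t a as the sandwiches by c a and a c in flipped order.\<close>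
  define \<phi> where "\<phi> x y = \<psi> (y * c * x)" for x y
  have "cbilinear_form iu \<phi>"
    unfolding \<phi>_def by (rule cbilinear_form_swap[OF cbilinear_form_sandwich[OF c]])
  with rep comm have "((\<lambda>j. tpair \<phi> (tlmul a (t j)) - tpair \<phi> (trmul (t j) a)) \<longlongrightarrow> 0) F"
    by (intro tendsto_tpair_diff tensor_rep_tlmul tensor_rep_trmul)
  moreover have "tpair \<phi> (tlmul a (t j)) = tsandwich \<psi> (t j) (c * a)" for j
    using sandwich_swap(1) by (simp add: \<phi>_def tpair_def tlmul_def mult.assoc)
  moreover have "tpair \<phi> (trmul (t j) a) = tsandwich \<psi> (t j) (a * c)" for j
    using sandwich_swap(2) by (simp add: \<phi>_def tpair_def trmul_def mult.assoc)
  ultimately show ?thesis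
    by simp
qed

lemma tendsto_tsandwich_one:
  assumes t: "symm_approx_diagonal iu F t"
  shows "((\<lambda>j. tsandwich \<psi> (t j) 1) \<longlongrightarrow> 1) F"
proof -
  have "((\<lambda>j. tpi (t j) * 1) \<longlongrightarrow> 1) F" and rep: "\<And>j. tensor_rep (t j)"
    using t unfolding symm_approx_diagonal_def by blast+
  then have "((\<lambda>j. \<psi> (tpi (t j))) \<longlongrightarrow> \<psi> 1) F"
    by (simp add: bounded_linear.tendsto[OF bounded_linear])
  then show ?thesis
    by (simp add: one tsandwich_one[OF rep])
qed

lemma cuntz_family_trivial_if_symm_approx_diagonal:
  fixes a c :: "nat \<Rightarrow> 'a"
  assumes t: "symm_approx_diagonal iu F t" and "F \<noteq> bot"
    and norm_a: "\<And>i. i < n \<Longrightarrow> norm (a i) \<le> 1" and norm_c: "\<And>i. i < n \<Longrightarrow> norm (c i) \<le> 1"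
    and ca: "\<And>i. i < n \<Longrightarrow> c i * a i = 1" and ac: "(\<Sum>i<n. a i * c i) = 1"
  shows "n = 1"
proof -
  let ?\<tau> = "\<lambda>j. tsandwich \<psi> (t j)"
  have rep: "tensor_rep (t j)" for j
    using t by (simp add: symm_approx_diagonal_def)
  have "((\<lambda>j. \<Sum>i<n. ?\<tau> j (c i * a i) - ?\<tau> j (a i * c i)) \<longlongrightarrow> 0) F"
    by (intro tendsto_null_sum tendsto_tsandwich_commutator[OF t]) (simp_all add: norm_a norm_c)
  moreover have "(\<Sum>i<n. ?\<tau> j (c i * a i) - ?\<tau> j (a i * c i)) = (of_nat n - 1) * ?\<tau> j 1" for j
    using tsandwich_sum[OF rep, where u = "\<lambda>i. a i * c i" and I = "{..<n}"]
    by (simp add: ca ac sum_subtractf algebra_simps)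
  ultimately have "((\<lambda>j. (of_nat n - 1) * ?\<tau> j 1) \<longlongrightarrow> 0) F"
    by simp
  moreover have "((\<lambda>j. (of_nat n - 1) * ?\<tau> j 1) \<longlongrightarrow> of_nat n - 1) F"
    using tendsto_mult_left[OF tendsto_tsandwich_one[OF t], of "of_nat n - 1"] by simp
  ultimately have "0 = (of_nat n - 1 :: complex)"
    by (rule tendsto_unique[OF \<open>F \<noteq> bot\<close>])
  then show "n = 1"
    by simp
qed

end

theorem mainTheorem4:
  fixes n :: nat and iu :: "'a::{real_normed_algebra_1,banach}"
    and st :: "'a \<Rightarrow> 'a" and T :: "nat \<Rightarrow> 'a"
  assumes "n > 1"
    and "is_cuntz_algebra n iu st T"
  shows "\<not> symmetrically_pseudo_amenable TYPE('i) iu"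
proof
  assume "symmetrically_pseudo_amenable TYPE('i) iu"
  then obtain F :: "'i filter" and t where "F \<noteq> bot" and t: "symm_approx_diagonal iu F t"
    unfolding symmetrically_pseudo_amenable_def by blast
  have cstar: "cstar_algebra iu st" and isometry: "\<And>i. i < n \<Longrightarrow> st (T i) * T i = 1"
    and sum: "(\<Sum>i<n. T i * st (T i)) = 1"
    using assms(2) unfolding is_cuntz_algebra_def by blast+
  have norm_T: "norm (T i) = 1" if "i < n" for i
    using cstar isometry[OF that] by (rule cstar_norm_isometry)
  have norm_st_T: "norm (st (T i)) = 1" if "i < n" for i
    using norm_T[OF that] cstar_norm_star[OF cstar, of "T i"] by simp
  obtain \<psi> where \<psi>: "complex_state iu \<psi>"
  proof (rule exE[OF complex_state_exists])
    show "iu * iu = - 1" and "\<And>x. iu * x = x * iu" and "\<And>c x. norm (cscale iu c x) = cmod c * norm x"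
      using cstar unfolding cstar_algebra_def by blast+
  qed
  have "n = 1"
    by (rule complex_state.cuntz_family_trivial_if_symm_approx_diagonal[OF \<psi> t \<open>F \<noteq> bot\<close> _ _ isometry sum])
      (simp_all add: norm_T norm_st_T)
  with \<open>n > 1\<close> show False
    by simp
qed

end
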